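(* Let $m\ge 1$ and $n\geq 3m+1$ be integers, and let $p,q$ be real numbers with $0<p\leq q$ and $0<p+q<1$. Then the minimum discrepancy of $C_{n,m}$ equals $$\delta(C_{n,m})=\min\{m^2,\ (1+\gamma)m\},$$ where $\gamma=\gamma_{p,q}=\log_{\frac{q}{1-p}}\left(\frac{p}{1-q}\right)$.
   Context: For integers $n\geq 2$, $N=\binom{n}{2}$ and $1\leq m\leq n$, the community code $C_{n,m}\subseteq\mathbb{F}_2^N$ consists of exactly those binary vectors of length $N$ that are the upper-triangular (off-diagonal) part of the adjacency matrix of a simple undirected graph on the labeled vertex set $\{1,\ldots,n\}$ which is a disjoint union of cliques, each clique having at least $m$ vertices. For $\mathbf{x},\mathbf{y}\in\mathbb{F}_2^N$ and $a,b\in\mathbb{F}_2$ let $d_{ab}(\mathbf{y},\mathbf{x})=|\{i: y_i=a,\ x_i=b\}|$. The discrepancy is $\delta(\mathbf{y},\mathbf{x})=\gamma\, d_{10}(\mathbf{y},\mathbf{x})+d_{01}(\mathbf{y},\mathbf{x})$ with $\gamma=\log_{\frac{q}{1-p}}\left(\frac{p}{1-q}\right)$. The minimum discrepancy $\delta(C)$ of a code $C$ is the minimum of $\delta(\mathbf{y},\mathbf{x})$ over all ordered pairs of distinct codewords $\mathbf{x},\mathbf{y}\in C$. *)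

theory Defs
  imports Complex_Main "HOL-Library.Disjoint_Sets"
begin

text \<open>Coordinates of F_2^N, N = n choose 2: unordered pairs {i,j} of vertices in {1..n},
  represented as ordered pairs (i,j) with i < j. A binary vector of length N is represented
  by its support, a subset of these coordinates (x_e = 1 iff e is in the set).\<close>
definition coords :: "nat \<Rightarrow> (nat \<times> nat) set" where
  "coords n = {(i,j). 1 \<le> i \<and> i < j \<and> j \<le> n}"

text \<open>Upper-triangular part of the adjacency matrix of the disjoint union of cliques
  on the blocks of a partition P of {1..n}.\<close>
definition clique_vector :: "nat \<Rightarrow> nat set set \<Rightarrow> (nat \<times> nat) set" where
  "clique_vector n P = {(i,j) \<in> coords n. \<exists>B\<in>P. i \<in> B \<and> j \<in> B}"

definition community_code :: "nat \<Rightarrow> nat \<Rightarrow> (nat \<times> nat) set set" where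
  "community_code n m =
     {clique_vector n P | P. partition_on {1..n} P \<and> (\<forall>B\<in>P. card B \<ge> m)}"

definition d_ab :: "nat \<Rightarrow> bool \<Rightarrow> bool \<Rightarrow> (nat \<times> nat) set \<Rightarrow> (nat \<times> nat) set \<Rightarrow> nat" where
  "d_ab n a b y x = card {e \<in> coords n. (e \<in> y) = a \<and> (e \<in> x) = b}"

definition gamma :: "real \<Rightarrow> real \<Rightarrow> real" where
  "gamma p q = log (q / (1 - p)) (p / (1 - q))"

definition discrepancy :: "nat \<Rightarrow> real \<Rightarrow> (nat \<times> nat) set \<Rightarrow> (nat \<times> nat) set \<Rightarrow> real" where
  "discrepancy n \<gamma> y x = \<gamma> * real (d_ab n True False y x) + real (d_ab n False True y x)"

definition min_discrepancy :: "nat \<Rightarrow> real \<Rightarrow> (nat \<times> nat) set set \<Rightarrow> real" where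
  "min_discrepancy n \<gamma> C = Min {discrepancy n \<gamma> y x | x y. x \<in> C \<and> y \<in> C \<and> x \<noteq> y}"

end

(* Write x and y for the clique vectors of partitions P and Q. The discrepancy is
   gamma |y - x| + |x - y|, where x - y consists of the pairs joined by P and split by Q.
   The heart of the proof is a trade-off: if Q splits fewer than m pairs of P, it joins at
   least m^2 new ones. Either P refines Q, and some block of Q contains two blocks of P; or
   exactly one block B of P is split, into parts S and T (splitting B costs
   |S| |T| >= |B| - 1 pairs), and the blocks of Q containing S and T each also contain a
   whole other block of P, which joins (|S| + |T|) m >= m^2 pairs. As gamma >= 1 this gives
   the lower bound min (m^2) ((1 + gamma) m). It is attained by splitting a block of size 2m
   into halves, and by moving one vertex between two blocks of size m + 1. *)

theory Submission
  imports Defs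
begin

lemma partition_on_block_subset: "partition_on A P \<Longrightarrow> B \<in> P \<Longrightarrow> B \<subseteq> A"
  unfolding partition_on_def by auto

lemma partition_on_obtain_block:
  assumes "partition_on A P" "x \<in> A"
  obtains B where "B \<in> P" "x \<in> B"
  using assms unfolding partition_on_def by blast

lemma partition_on_block_eq:
  assumes "partition_on A P" "B \<in> P" "B' \<in> P" "x \<in> B" "x \<in> B'"
  shows "B = B'"
  using assms unfolding partition_on_def disjoint_def by blast

lemma partition_on_eqI:
  assumes "partition_on A P" "partition_on A Q"
    and "\<And>B C. B \<in> P \<Longrightarrow> C \<in> Q \<Longrightarrow> B \<inter> C \<noteq> {} \<Longrightarrow> B = C"
  shows "P = Q"
proof -
  have "P' \<subseteq> Q'" if P': "partition_on A P'" and Q': "partition_on A Q'"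
    and same: "\<And>B C. B \<in> P' \<Longrightarrow> C \<in> Q' \<Longrightarrow> B \<inter> C \<noteq> {} \<Longrightarrow> B = C" for P' Q'
  proof
    fix B assume "B \<in> P'"
    then obtain x where "x \<in> B" "x \<in> A"
      using P' unfolding partition_on_def by (metis Union_upper all_not_in_conv subsetD)
    then obtain C where "C \<in> Q'" "x \<in> C"
      using Q' partition_on_obtain_block by metis
    then show "B \<in> Q'"
      using same \<open>B \<in> P'\<close> \<open>x \<in> B\<close> by blast
  qed
  then show ?thesis
    using assms by (metis inf_commute subset_antisym)
qed

definition cross_pairs :: "nat set \<Rightarrow> nat set \<Rightarrow> (nat \<times> nat) set" where
  "cross_pairs S T = {(i,j). i < j \<and> (i \<in> S \<and> j \<in> T \<or> i \<in> T \<and> j \<in> S)}"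

lemma cross_pairs_singletons: "a \<noteq> b \<Longrightarrow> cross_pairs {a} {b} = {(min a b, max a b)}"
  by (auto simp: cross_pairs_def min_def max_def)

lemma card_cross_pairs:
  assumes "S \<inter> T = {}"
  shows "card (cross_pairs S T) = card S * card T"
proof -
  let ?sort = "\<lambda>(s, t). (min s t, max s t :: nat)"
  have "inj_on ?sort (S \<times> T)"
    using assms by (auto simp: inj_on_def min_def max_def split: if_splits)
  moreover have "cross_pairs S T = ?sort ` (S \<times> T)"
  proof
    show "cross_pairs S T \<subseteq> ?sort ` (S \<times> T)"
    proof
      fix e assume "e \<in> cross_pairs S T"
      then obtain i j where ij: "e = (i, j)" "i < j" "i \<in> S \<and> j \<in> T \<or> i \<in> T \<and> j \<in> S"
        unfolding cross_pairs_def by blast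
      then have "e = ?sort (i, j) \<and> (i, j) \<in> S \<times> T \<or> e = ?sort (j, i) \<and> (j, i) \<in> S \<times> T"
        by auto
      then show "e \<in> ?sort ` (S \<times> T)"
        by blast
    qed
    show "?sort ` (S \<times> T) \<subseteq> cross_pairs S T"
    proof
      fix e assume "e \<in> ?sort ` (S \<times> T)"
      then obtain s t where e: "e = ?sort (s, t)" "s \<in> S" "t \<in> T"
        by blast
      then have "s < t \<or> t < s"
        using assms by (metis disjoint_iff linorder_neqE_nat)
      then show "e \<in> cross_pairs S T"
        using e by (auto simp: cross_pairs_def)
    qed
  qed
  ultimately show ?thesis
    by (simp add: card_image card_cartesian_product)
qed

lemma finite_coords: "finite (coords n)"
  by (rule finite_subset[of _ "{1..n} \<times> {1..n}"]) (auto simp: coords_def)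

lemma clique_vector_subset_coords: "clique_vector n P \<subseteq> coords n"
  unfolding clique_vector_def by auto

lemma cross_pairs_subset_clique_vector_diff:
  assumes P: "partition_on {1..n} P" and Q: "partition_on {1..n} Q"
    and "B \<in> P" "C \<in> Q" "S \<subseteq> B \<inter> C" "T \<subseteq> B - C"
  shows "cross_pairs S T \<subseteq> clique_vector n P - clique_vector n Q"
proof
  fix e assume e: "e \<in> cross_pairs S T"
  then obtain i j where ij: "e = (i, j)" "i < j" "i \<in> B" "j \<in> B" "i \<in> C \<longleftrightarrow> j \<notin> C"
    using assms(5,6) unfolding cross_pairs_def by blast
  have "B \<subseteq> {1..n}"
    using P \<open>B \<in> P\<close> by (rule partition_on_block_subset)
  then have "e \<in> clique_vector n P"
    using ij \<open>B \<in> P\<close> unfolding clique_vector_def coords_def by auto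
  moreover have "e \<notin> clique_vector n Q"
    using ij partition_on_block_eq[OF Q \<open>C \<in> Q\<close>] unfolding clique_vector_def by blast
  ultimately show "e \<in> clique_vector n P - clique_vector n Q" by blast
qed

lemma block_subset_block_outside_split_pairs:
  assumes P: "partition_on {1..n} P" and Q: "partition_on {1..n} Q"
    and unsplit: "clique_vector n P - clique_vector n Q \<subseteq> A \<times> A"
    and "B \<in> P" "C \<in> Q" "x \<in> B" "x \<in> C" "x \<notin> A"
  shows "B \<subseteq> C"
proof
  fix u assume "u \<in> B"
  show "u \<in> C"
  proof (rule ccontr)
    assume "u \<notin> C"
    then have "cross_pairs {x} {u} \<subseteq> A \<times> A"
      using cross_pairs_subset_clique_vector_diff[OF P Q \<open>B \<in> P\<close> \<open>C \<in> Q\<close>, of "{x}" "{u}"]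
        \<open>x \<in> B\<close> \<open>x \<in> C\<close> \<open>u \<in> B\<close> unsplit by blast
    moreover have "x \<noteq> u"
      using \<open>x \<in> C\<close> \<open>u \<notin> C\<close> by blast
    ultimately show False
      using \<open>x \<notin> A\<close> by (auto simp: cross_pairs_singletons min_def max_def split: if_splits)
  qed
qed

lemma obtain_block_within_outside:
  assumes P: "partition_on {1..n} P" and Q: "partition_on {1..n} Q"
    and unsplit: "clique_vector n P - clique_vector n Q \<subseteq> B \<times> B"
    and "B \<in> P" "C \<in> Q" "\<not> C \<subseteq> B"
  obtains B' where "B' \<in> P" "B' \<subseteq> C" "B' \<inter> B = {}"
proof -
  obtain w where w: "w \<in> C" "w \<notin> B"
    using \<open>\<not> C \<subseteq> B\<close> by blast
  have "w \<in> {1..n}"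
    using partition_on_block_subset[OF Q \<open>C \<in> Q\<close>] w(1) by blast
  then obtain B' where B': "B' \<in> P" "w \<in> B'"
    using partition_on_obtain_block[OF P] by metis
  have "B' \<subseteq> C"
    by (rule block_subset_block_outside_split_pairs[OF P Q unsplit B'(1) \<open>C \<in> Q\<close> B'(2) w])
  moreover have "B' \<inter> B = {}"
    using partition_on_block_eq[OF P \<open>B \<in> P\<close> B'(1)] B'(2) w(2) by blast
  ultimately show thesis
    using that B'(1) by blast
qed

lemma mult_card_block_le_card_clique_vector_diff:
  assumes P: "partition_on {1..n} P" and Q: "partition_on {1..n} Q"
    and sizes: "\<forall>B'\<in>P. m \<le> card B'"
    and unsplit: "clique_vector n P - clique_vector n Q \<subseteq> B \<times> B"
    and "B \<in> P" "C \<in> Q" "C' \<in> Q" "B \<subseteq> C \<union> C'" "\<not> C \<subseteq> B" "\<not> C' \<subseteq> B"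
  shows "m * card B \<le> card (clique_vector n Q - clique_vector n P)"
proof -
  obtain D where D: "D \<in> P" "D \<subseteq> C" "D \<inter> B = {}"
    using obtain_block_within_outside[OF P Q unsplit \<open>B \<in> P\<close> \<open>C \<in> Q\<close> \<open>\<not> C \<subseteq> B\<close>] .
  obtain D' where D': "D' \<in> P" "D' \<subseteq> C'" "D' \<inter> B = {}"
    using obtain_block_within_outside[OF P Q unsplit \<open>B \<in> P\<close> \<open>C' \<in> Q\<close> \<open>\<not> C' \<subseteq> B\<close>] .
  define S where "S = B \<inter> C"
  define T where "T = B - C"
  let ?L = "clique_vector n Q - clique_vector n P"
  have fin: "finite ?L"
    using finite_subset[OF clique_vector_subset_coords finite_coords] by blast
  have sub_S: "cross_pairs S D \<subseteq> ?L"
    using D unfolding S_def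
    by (intro cross_pairs_subset_clique_vector_diff[OF Q P \<open>C \<in> Q\<close> \<open>B \<in> P\<close>]) blast+
  have sub_T: "cross_pairs T D' \<subseteq> ?L"
    using D' \<open>B \<subseteq> C \<union> C'\<close> unfolding T_def
    by (intro cross_pairs_subset_clique_vector_diff[OF Q P \<open>C' \<in> Q\<close> \<open>B \<in> P\<close>]) blast+
  have "finite B"
    using partition_on_block_subset[OF P \<open>B \<in> P\<close>] finite_subset by blast
  then have "card B = card S + card T"
    unfolding S_def T_def by (metis card_Int_Diff)
  then have "m * card B \<le> card S * card D + card T * card D'"
    using sizes D(1) D'(1) by (simp add: add_mono add_mult_distrib2 mult.commute)
  also have "\<dots> = card (cross_pairs S D \<union> cross_pairs T D')"
  proof -
    have "S \<inter> D = {}" "T \<inter> D' = {}"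
      using D(3) D'(3) unfolding S_def T_def by blast+
    moreover have "cross_pairs S D \<inter> cross_pairs T D' = {}"
      using D(3) D'(3) unfolding S_def T_def cross_pairs_def by blast
    ultimately show ?thesis
      using finite_subset[OF sub_S fin] finite_subset[OF sub_T fin]
      by (simp add: card_Un_disjoint card_cross_pairs)
  qed
  also have "\<dots> \<le> card ?L"
    using sub_S sub_T fin by (simp add: card_mono)
  finally show ?thesis .
qed

text \<open>Splitting B into S and T already costs |S| |T| \<ge> |S| + |T| - 1 = |B| - 1 pairs.\<close>
lemma clique_vector_diff_eq_cross_pairs:
  assumes P: "partition_on {1..n} P" and Q: "partition_on {1..n} Q"
    and "B \<in> P" "C \<in> Q" "B \<inter> C \<noteq> {}" "\<not> B \<subseteq> C"
    and few: "card (clique_vector n P - clique_vector n Q) < card B"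
  shows "clique_vector n P - clique_vector n Q = cross_pairs (B \<inter> C) (B - C)"
proof -
  let ?L = "clique_vector n P - clique_vector n Q"
  have "finite B"
    using partition_on_block_subset[OF P \<open>B \<in> P\<close>] finite_subset by blast
  then have "card (B \<inter> C) \<ge> 1" "card (B - C) \<ge> 1" "card B = card (B \<inter> C) + card (B - C)"
    using assms(5,6) by (auto simp: Suc_le_eq card_gt_0_iff card_Int_Diff)
  then have "card ?L \<le> card (B \<inter> C) * card (B - C)"
    using few by (cases "card (B \<inter> C)"; cases "card (B - C)") auto
  also have "\<dots> = card (cross_pairs (B \<inter> C) (B - C))"
    by (simp add: card_cross_pairs Int_Diff_disjoint)
  finally show ?thesis
    using cross_pairs_subset_clique_vector_diff[OF P Q \<open>B \<in> P\<close> \<open>C \<in> Q\<close> order_refl order_refl]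
      finite_subset[OF clique_vector_subset_coords finite_coords]
    by (metis card_subset_eq finite_Diff le_antisym card_mono)
qed

lemma block_diff_subset_block:
  assumes P: "partition_on {1..n} P" and Q: "partition_on {1..n} Q"
    and L: "clique_vector n P - clique_vector n Q = cross_pairs (B \<inter> C) (B - C)"
    and "B \<in> P" "C' \<in> Q" "j \<in> B - C" "j \<in> C'"
  shows "B - C \<subseteq> C'"
proof
  fix t assume t: "t \<in> B - C"
  show "t \<in> C'"
  proof (rule ccontr)
    assume "t \<notin> C'"
    then have "cross_pairs {j} {t} \<subseteq> cross_pairs (B \<inter> C) (B - C)"
      using cross_pairs_subset_clique_vector_diff[OF P Q \<open>B \<in> P\<close> \<open>C' \<in> Q\<close>, of "{j}" "{t}"]
        L assms(6,7) t by blast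
    moreover have "j \<noteq> t"
      using \<open>j \<in> C'\<close> \<open>t \<notin> C'\<close> by blast
    ultimately have "(min j t, max j t) \<in> cross_pairs (B \<inter> C) (B - C)"
      by (simp add: cross_pairs_singletons)
    then show False
      using \<open>j \<in> B - C\<close> t by (auto simp: cross_pairs_def min_def max_def split: if_splits)
  qed
qed

lemma card_clique_vector_diff_ge_square_if_split:
  assumes P: "partition_on {1..n} P" and Q: "partition_on {1..n} Q"
    and sizes_P: "\<forall>B\<in>P. m \<le> card B" and sizes_Q: "\<forall>C\<in>Q. m \<le> card C"
    and few: "card (clique_vector n P - clique_vector n Q) < m"
    and "B \<in> P" "C \<in> Q" "B \<inter> C \<noteq> {}" "j \<in> B" "j \<notin> C"
  shows "m * m \<le> card (clique_vector n Q - clique_vector n P)"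
proof -
  have "finite B"
    using partition_on_block_subset[OF P \<open>B \<in> P\<close>] finite_subset by blast
  obtain C' where C': "C' \<in> Q" "j \<in> C'"
    using partition_on_obtain_block[OF Q] partition_on_block_subset[OF P \<open>B \<in> P\<close>] \<open>j \<in> B\<close>
    by blast
  have L: "clique_vector n P - clique_vector n Q = cross_pairs (B \<inter> C) (B - C)"
    using few sizes_P assms(6-10)
    by (intro clique_vector_diff_eq_cross_pairs[OF P Q \<open>B \<in> P\<close> \<open>C \<in> Q\<close>]) fastforce+
  have "B - C \<subseteq> C'"
    using block_diff_subset_block[OF P Q L \<open>B \<in> P\<close> C'(1) _ C'(2)] assms(9,10) by blast
  have "1 \<le> card (B \<inter> C)" "1 \<le> card (B - C)"
    using \<open>finite B\<close> assms(8-10) by (auto simp: Suc_le_eq card_gt_0_iff)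
  then have "card (B \<inter> C) \<le> card (B \<inter> C) * card (B - C)"
    "card (B - C) \<le> card (B \<inter> C) * card (B - C)"
    by simp_all
  moreover have "card (B \<inter> C) * card (B - C) < m"
    using few L by (simp add: card_cross_pairs Int_Diff_disjoint)
  ultimately have small: "card (B \<inter> C) < m" "card (B - C) < m"
    by linarith+
  have "\<not> C \<subseteq> B"
  proof
    assume "C \<subseteq> B"
    then have "card C \<le> card (B \<inter> C)"
      using \<open>finite B\<close> by (intro card_mono) auto
    then show False
      using small sizes_Q \<open>C \<in> Q\<close> by fastforce
  qed
  moreover have "\<not> C' \<subseteq> B"
  proof
    assume "C' \<subseteq> B"
    moreover have "C' \<inter> C = {}"
      using partition_on_block_eq[OF Q \<open>C \<in> Q\<close> C'(1)] C'(2) \<open>j \<notin> C\<close> by blast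
    ultimately have "card C' \<le> card (B - C)"
      using \<open>finite B\<close> by (intro card_mono) auto
    then show False
      using small sizes_Q C'(1) by fastforce
  qed
  moreover have "clique_vector n P - clique_vector n Q \<subseteq> B \<times> B"
    unfolding L cross_pairs_def by blast
  ultimately have "m * card B \<le> card (clique_vector n Q - clique_vector n P)"
    using \<open>B - C \<subseteq> C'\<close>
    by (intro mult_card_block_le_card_clique_vector_diff[OF P Q sizes_P _ \<open>B \<in> P\<close> \<open>C \<in> Q\<close> C'(1)])
      auto
  then show ?thesis
    using sizes_P \<open>B \<in> P\<close> by (meson le_trans mult_le_mono2)
qed

lemma card_clique_vector_diff_ge_square:
  assumes P: "partition_on {1..n} P" and Q: "partition_on {1..n} Q"
    and sizes_P: "\<forall>B\<in>P. m \<le> card B" and sizes_Q: "\<forall>C\<in>Q. m \<le> card C"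
    and "P \<noteq> Q" and few: "card (clique_vector n P - clique_vector n Q) < m"
  shows "m * m \<le> card (clique_vector n Q - clique_vector n P)"
proof (cases "clique_vector n P - clique_vector n Q = {}")
  case True
  obtain B C where "B \<in> P" "C \<in> Q" "B \<inter> C \<noteq> {}" "B \<noteq> C"
    using partition_on_eqI[OF P Q] \<open>P \<noteq> Q\<close> by blast
  moreover have "B \<subseteq> C"
    using calculation True block_subset_block_outside_split_pairs[OF P Q, of "{}"] by blast
  ultimately have "m * card B \<le> card (clique_vector n Q - clique_vector n P)"
    using True by (intro mult_card_block_le_card_clique_vector_diff[OF P Q sizes_P, of B C C]) auto
  then show ?thesis
    using sizes_P \<open>B \<in> P\<close> by (meson le_trans mult_le_mono2)
next
  case False
  then obtain i j where "(i, j) \<in> clique_vector n P - clique_vector n Q"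
    by auto
  then obtain B where "B \<in> P" "i \<in> B" "j \<in> B" "i \<in> {1..n}"
    "\<not> (\<exists>C\<in>Q. i \<in> C \<and> j \<in> C)"
    unfolding clique_vector_def coords_def by auto
  moreover obtain C where "C \<in> Q" "i \<in> C"
    using partition_on_obtain_block[OF Q \<open>i \<in> {1..n}\<close>] .
  ultimately show ?thesis
    by (intro card_clique_vector_diff_ge_square_if_split[OF P Q sizes_P sizes_Q few, of B C j]) auto
qed

lemma discrepancy_eq_card_diff:
  assumes "x \<subseteq> coords n" "y \<subseteq> coords n"
  shows "discrepancy n g y x = g * real (card (y - x)) + real (card (x - y))"
proof -
  have "{e \<in> coords n. (e \<in> y) = True \<and> (e \<in> x) = False} = y - x"
    "{e \<in> coords n. (e \<in> y) = False \<and> (e \<in> x) = True} = x - y"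
    using assms by auto
  then show ?thesis
    unfolding discrepancy_def d_ab_def by simp
qed

lemma min_square_linear_le:
  fixes a b m :: nat and g :: real
  assumes "1 \<le> g" and "b < m \<Longrightarrow> m * m \<le> a" and "a < m \<Longrightarrow> m * m \<le> b"
  shows "min (real (m ^ 2)) ((1 + g) * real m) \<le> g * real a + real b"
proof -
  have ga: "real a \<le> g * real a"
    using mult_right_mono[OF \<open>1 \<le> g\<close>, of "real a"] by simp
  have sq: "real (m ^ 2) = real m * real m"
    by (simp add: power2_eq_square)
  consider "b < m" | "a < m" | "m \<le> a" "m \<le> b"
    by linarith
  then show ?thesis
  proof cases
    case 1
    then have "real m * real m \<le> real a"
      using assms(2) of_nat_mono by fastforce
    then show ?thesis
      using ga sq by linarith
  next
    case 2
    then have "real m * real m \<le> real b"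
      using assms(3) of_nat_mono by fastforce
    then show ?thesis
      using ga sq \<open>1 \<le> g\<close> by (simp add: min_le_iff_disj)
  next
    case 3
    then have "g * real m \<le> g * real a" "real m \<le> real b"
      using \<open>1 \<le> g\<close> by (simp_all add: mult_left_mono)
    then show ?thesis
      by (simp add: algebra_simps)
  qed
qed

lemma one_le_log_if_le:
  fixes a b :: real
  assumes "0 < a" "a \<le> b" "b < 1"
  shows "1 \<le> log b a"
proof -
  have "ln a \<le> ln b" "ln b < 0"
    using assms by simp_all
  then show ?thesis
    by (simp add: log_def divide_simps)
qed

lemma one_le_gamma:
  fixes p q :: real
  assumes "0 < p" "p \<le> q" "p + q < 1"
  shows "1 \<le> gamma p q"
  unfolding gamma_def
proof (rule one_le_log_if_le)
  have "q * (1 - q) - p * (1 - p) = (q - p) * (1 - p - q)"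
    by (simp add: algebra_simps)
  also have "\<dots> \<ge> 0"
    using assms by simp
  finally show "p / (1 - q) \<le> q / (1 - p)"
    using assms by (simp add: divide_simps mult.commute)
qed (use assms in \<open>simp_all add: divide_simps\<close>)

lemma finite_community_code: "finite (community_code n m)"
proof (rule finite_subset)
  show "community_code n m \<subseteq> Pow (coords n)"
    unfolding community_code_def using clique_vector_subset_coords by blast
qed (simp add: finite_coords)

lemma discrepancy_clique_vectors:
  "discrepancy n g (clique_vector n Q) (clique_vector n P)
    = g * real (card (clique_vector n Q - clique_vector n P))
      + real (card (clique_vector n P - clique_vector n Q))"
  by (intro discrepancy_eq_card_diff clique_vector_subset_coords)

lemma discrepancy_community_code_ge:
  assumes "1 \<le> g" "x \<in> community_code n m" "y \<in> community_code n m" "x \<noteq> y"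
  shows "min (real (m ^ 2)) ((1 + g) * real m) \<le> discrepancy n g y x"
proof -
  obtain P where P: "x = clique_vector n P" "partition_on {1..n} P" "\<forall>B\<in>P. m \<le> card B"
    using assms(2) unfolding community_code_def by blast
  obtain Q where Q: "y = clique_vector n Q" "partition_on {1..n} Q" "\<forall>C\<in>Q. m \<le> card C"
    using assms(3) unfolding community_code_def by blast
  have "P \<noteq> Q"
    using assms(4) P(1) Q(1) by blast
  then show ?thesis
    unfolding P(1) Q(1) discrepancy_clique_vectors
    using card_clique_vector_diff_ge_square[OF P(2) Q(2) P(3) Q(3)]
      card_clique_vector_diff_ge_square[OF Q(2) P(2) Q(3) P(3)]
    by (intro min_square_linear_le[OF \<open>1 \<le> g\<close>]) auto
qed

lemma min_discrepancy_eqI: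
  assumes "finite C" "x \<in> C" "y \<in> C" "x \<noteq> y" "discrepancy n g y x = d"
    and "\<And>x y. x \<in> C \<Longrightarrow> y \<in> C \<Longrightarrow> x \<noteq> y \<Longrightarrow> d \<le> discrepancy n g y x"
  shows "min_discrepancy n g C = d"
  unfolding min_discrepancy_def
proof (rule Min_eqI)
  have "{discrepancy n g y x |x y. x \<in> C \<and> y \<in> C \<and> x \<noteq> y}
    \<subseteq> (\<lambda>(x, y). discrepancy n g y x) ` (C \<times> C)"
    by auto
  then show "finite {discrepancy n g y x |x y. x \<in> C \<and> y \<in> C \<and> x \<noteq> y}"
    by (rule finite_subset) (use assms(1) in blast)
qed (use assms in blast)+

lemma clique_vector_mem_community_code:
  "partition_on {1..n} P \<Longrightarrow> \<forall>B\<in>P. m \<le> card B \<Longrightarrow> clique_vector n P \<in> community_code n m"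
  unfolding community_code_def by blast

lemma community_code_discrepancy_square:
  assumes "1 \<le> m" "3 * m \<le> n"
  obtains x y where "x \<in> community_code n m" "y \<in> community_code n m" "x \<noteq> y"
    "discrepancy n g y x = real (m ^ 2)"
proof -
  define P where "P = {{1..2*m}, {2*m+1..n}}"
  define Q where "Q = {{1..m}, {m+1..2*m}, {2*m+1..n}}"
  have QP: "clique_vector n Q - clique_vector n P = {}"
    unfolding clique_vector_def P_def Q_def by auto
  have PQ: "clique_vector n P - clique_vector n Q = {1..m} \<times> {m+1..2*m}"
    unfolding clique_vector_def coords_def P_def Q_def using assms by auto
  show thesis
  proof (rule that)
    show "clique_vector n P \<in> community_code n m"
      unfolding P_def using assms
      by (intro clique_vector_mem_community_code) (auto simp: partition_on_def disjoint_def)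
    show "clique_vector n Q \<in> community_code n m"
      unfolding Q_def using assms
      by (intro clique_vector_mem_community_code) (auto simp: partition_on_def disjoint_def)
    have "(1, m+1) \<in> clique_vector n P - clique_vector n Q"
      unfolding PQ using assms(1) by simp
    then show "clique_vector n P \<noteq> clique_vector n Q"
      by blast
    show "discrepancy n g (clique_vector n Q) (clique_vector n P) = real (m ^ 2)"
      unfolding discrepancy_clique_vectors QP PQ by (simp add: power2_eq_square)
  qed
qed

lemma community_code_discrepancy_linear:
  assumes "1 \<le> m" "3 * m + 1 \<le> n"
  obtains x y where "x \<in> community_code n m" "y \<in> community_code n m" "x \<noteq> y"
    "discrepancy n g y x = (1 + g) * real m"
proof -
  define P where "P = {{1..m+1}, {m+2..2*m+1}, {2*m+2..n}}"
  define Q where "Q = {{1..m}, {m+1..2*m+1}, {2*m+2..n}}"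
  have QP: "clique_vector n Q - clique_vector n P = {m+1} \<times> {m+2..2*m+1}"
    unfolding clique_vector_def coords_def P_def Q_def using assms by auto
  have PQ: "clique_vector n P - clique_vector n Q = {1..m} \<times> {m+1}"
    unfolding clique_vector_def coords_def P_def Q_def using assms by auto
  show thesis
  proof (rule that)
    show "clique_vector n P \<in> community_code n m"
      unfolding P_def using assms
      by (intro clique_vector_mem_community_code) (auto simp: partition_on_def disjoint_def)
    show "clique_vector n Q \<in> community_code n m"
      unfolding Q_def using assms
      by (intro clique_vector_mem_community_code) (auto simp: partition_on_def disjoint_def)
    have "(1, m+1) \<in> clique_vector n P - clique_vector n Q"
      unfolding PQ using assms(1) by simp
    then show "clique_vector n P \<noteq> clique_vector n Q"
      by blast
    show "discrepancy n g (clique_vector n Q) (clique_vector n P) = (1 + g) * real m"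
      unfolding discrepancy_clique_vectors QP PQ by (simp add: algebra_simps)
  qed
qed

theorem corollary2:
  fixes n m :: nat and p q :: real
  assumes "m \<ge> 1" and "n \<ge> 3 * m + 1"
    and "0 < p" and "p \<le> q" and "0 < p + q" and "p + q < 1"
  shows "min_discrepancy n (gamma p q) (community_code n m)
           = min (real (m ^ 2)) ((1 + gamma p q) * real m)"
proof -
  let ?g = "gamma p q"
  let ?d = "min (real (m ^ 2)) ((1 + ?g) * real m)"
  have "?d = real (m ^ 2) \<or> ?d = (1 + ?g) * real m"
    by linarith
  moreover have "3 * m \<le> n"
    using assms(2) by linarith
  ultimately obtain x y where xy: "x \<in> community_code n m" "y \<in> community_code n m" "x \<noteq> y"
    and "discrepancy n ?g y x = ?d"
    using community_code_discrepancy_square[OF assms(1) \<open>3 * m \<le> n\<close>, of ?g]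
      community_code_discrepancy_linear[OF assms(1,2), of ?g]
    by (elim disjE) auto
  then show ?thesis
    using finite_community_code xy discrepancy_community_code_ge[OF one_le_gamma[OF assms(3,4,6)]]
    by (intro min_discrepancy_eqI) blast+
qed

end
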